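(* There is a universal constant $C$ such that for every prime $p$, every positive integer $k$, every $\epsilon\in(0,1)$, and every $g\in\mathbb{Z}_p$, there is a $k$-party, one-round protocol using public randomness for the Sum-Equal problem over $\mathbb{Z}_p$ relative to $g$, with error at most $\epsilon$ and total communication complexity at most $k\log(k/\epsilon)+C\cdot k$.
   Context: Model: parties $P_1,\dots,P_k$ each hold an input $x_i\in\mathbb{Z}_p$; a coordinator (distinct from the parties) wants to compute $f(x_1,\dots,x_k)$. In a one-round protocol with public randomness, a random string $r$ is shared by all parties and the coordinator; each party sends a single message, depending only on its own input and $r$, to the coordinator, who outputs a value depending only on the received messages and $r$; there is no other communication. The protocol has error at most $\epsilon$ if for every input $(x_1,\dots,x_k)$ the probability over $r$ that the output differs from $f(x_1,\dots,x_k)$ is at most $\epsilon$. Total communication complexity is the maximum total number of bits sent by all parties. Sum-Equal relative to $g$: $f(x_1,\dots,x_k)=1$ if $\sum_i x_i\equiv g\pmod p$ and $0$ otherwise. $\log$ is base 2. *)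

theory Defs
  imports "HOL-Probability.Probability_Mass_Function" "HOL-Computational_Algebra.Primes"
begin

text \<open>Inputs of the k parties: x :: nat \<Rightarrow> nat, with x i \<in> {0..<p} representing Z_p.\<close>
definition valid_input :: "nat \<Rightarrow> nat \<Rightarrow> (nat \<Rightarrow> nat) \<Rightarrow> bool" where
  "valid_input p k x \<longleftrightarrow> (\<forall>i<k. x i < p)"

definition sum_equal :: "nat \<Rightarrow> nat \<Rightarrow> nat \<Rightarrow> (nat \<Rightarrow> nat) \<Rightarrow> bool" where
  "sum_equal p g k x \<longleftrightarrow> (\<Sum>i<k. x i) mod p = g mod p"

text \<open>One-round public-coin protocol: shared random string r drawn from R (a discrete
  distribution); party i sends the bit string enc i (x i) r; the coordinator outputs
  dec [msg_0,...,msg_{k-1}] r.\<close>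
definition one_round_protocol ::
  "nat \<Rightarrow> nat \<Rightarrow> ((nat \<Rightarrow> nat) \<Rightarrow> bool) \<Rightarrow> nat pmf \<Rightarrow> (nat \<Rightarrow> nat \<Rightarrow> nat \<Rightarrow> bool list)
   \<Rightarrow> (bool list list \<Rightarrow> nat \<Rightarrow> bool) \<Rightarrow> real \<Rightarrow> real \<Rightarrow> bool" where
  "one_round_protocol p k f R enc dec eps bits \<longleftrightarrow>
     (\<forall>x. valid_input p k x \<longrightarrow>
        measure_pmf.prob R {r. dec (map (\<lambda>i. enc i (x i) r) [0..<k]) r \<noteq> f x} \<le> eps) \<and>
     (\<forall>x r. valid_input p k x \<longrightarrow> r \<in> set_pmf R \<longrightarrow>
        real (\<Sum>i<k. length (enc i (x i) r)) \<le> bits)"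

end

theory Submission
  imports Defs "HOL-Number_Theory.Cong"
begin

text \<open>
  Party 0 adds \<open>p - g\<close> to its input; with \<open>y\<^sub>i\<close> the shifted inputs, the answer is 1 iff
  \<open>p\<close> divides \<open>D = \<Sum> y\<^sub>i\<close>. With a shared multiplier \<open>a\<close> uniform in \<open>{1..<p}\<close>, party \<open>i\<close> computes
  \<open>z\<^sub>i = a y\<^sub>i mod p\<close> and sends \<open>\<lfloor>z\<^sub>i 2\<^sup>b / p\<rfloor>\<close> in \<open>b\<close> bits. The truncations lose
  less than \<open>k\<close> in total, so the coordinator accepts iff some multiple of \<open>2\<^sup>b\<close> lies in
  \<open>[Q, Q + k)\<close>, where \<open>Q\<close> is the sum of the messages. If \<open>p\<close> divides \<open>D\<close>, then \<open>p\<close>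
  divides \<open>\<Sum> z\<^sub>i\<close> and the coordinator always accepts. Otherwise acceptance forces the
  nonzero residue \<open>a D mod p\<close> to lie within \<open>k p / 2\<^sup>b\<close> of \<open>0\<close> modulo \<open>p\<close>; as
  \<open>a \<mapsto> a D mod p\<close> is injective, this has probability at most
  \<open>2 k p / (2\<^sup>b (p - 1)) \<le> 4 k / 2\<^sup>b\<close>. Choosing \<open>b = \<lceil>log\<^sub>2 (4 k / \<epsilon>)\<rceil>\<close> gives error
  at most \<open>\<epsilon>\<close> with \<open>k b \<le> k log\<^sub>2 (k / \<epsilon>) + 3 k\<close> bits, so \<open>C = 3\<close> works.
\<close>

lemma sum_div_mult_le:
  fixes f :: "'a \<Rightarrow> nat"
  shows "(\<Sum>i\<in>A. f i div p) * p \<le> (\<Sum>i\<in>A. f i)"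
  unfolding sum_distrib_right by (rule sum_mono) (rule div_times_less_eq_dividend)

lemma sum_less_sum_div_add_card_mult:
  fixes f :: "'a \<Rightarrow> nat"
  assumes "finite A" "A \<noteq> {}" "p > 0"
  shows "(\<Sum>i\<in>A. f i) < ((\<Sum>i\<in>A. f i div p) + card A) * p"
proof -
  have "(\<Sum>i\<in>A. f i) < (\<Sum>i\<in>A. (f i div p + 1) * p)"
    using assms by (intro sum_strict_mono) (auto simp: dividend_less_times_div mult.commute)
  also have "\<dots> = ((\<Sum>i\<in>A. f i div p) + card A) * p"
    by (simp add: sum_distrib_right sum_distrib_left sum.distrib algebra_simps)
  finally show ?thesis .
qed

lemma inj_on_mult_mod_prime:
  fixes p d :: nat
  assumes "prime p" "\<not> p dvd d"
  shows "inj_on (\<lambda>a. a * d mod p) {..<p}"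
proof (rule inj_onI)
  fix a a' assume "a \<in> {..<p}" "a' \<in> {..<p}" "a * d mod p = a' * d mod p"
  moreover have "coprime d p"
    using assms prime_imp_coprime coprime_commute by blast
  ultimately show "a = a'"
    using cong_mult_rcancel_nat[of d p a a'] by (simp add: cong_def)
qed

lemma dvd_add_diff_iff_mod_eq:
  fixes s g p :: nat
  assumes "g < p"
  shows "p dvd s + (p - g) \<longleftrightarrow> s mod p = g"
proof -
  have "g + (p - g) = p"
    using assms by simp
  then have "p dvd s + (p - g) \<longleftrightarrow> [s + (p - g) = g + (p - g)] (mod p)"
    by (simp only: cong_def mod_self dvd_eq_mod_eq_0)
  also have "\<dots> \<longleftrightarrow> [s = g] (mod p)"
    by (rule cong_add_rcancel_nat)
  also have "\<dots> \<longleftrightarrow> s mod p = g"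
    using assms by (simp add: cong_def)
  finally show ?thesis .
qed

lemma card_near_zero_residues:
  fixes p M c :: nat
  assumes "M > 0"
  shows "card {r \<in> {1..<p}. r * M < c \<or> (p - r) * M < c} \<le> 2 * (c div M)"
proof -
  let ?t = "c div M"
  have "r * M < c \<Longrightarrow> r \<le> ?t" for r
    using assms by (simp add: less_eq_div_iff_mult_less_eq)
  then have "{r \<in> {1..<p}. r * M < c \<or> (p - r) * M < c} \<subseteq> {1..?t} \<union> {p - ?t..<p}"
    by fastforce
  then have "card {r \<in> {1..<p}. r * M < c \<or> (p - r) * M < c} \<le> card ({1..?t} \<union> {p - ?t..<p})"
    by (intro card_mono) auto
  also have "\<dots> \<le> card {1..?t} + card {p - ?t..<p}"
    by (rule card_Un_le)
  also have "\<dots> \<le> 2 * ?t"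
    by simp
  finally show ?thesis .
qed

definition multiple_in_window :: "nat \<Rightarrow> nat \<Rightarrow> nat \<Rightarrow> bool" where
  "multiple_in_window M Q k \<longleftrightarrow> (\<exists>j. Q \<le> j * M \<and> j * M < Q + k)"

lemma multiple_in_window_if_dvd:
  fixes p Q S M k :: nat
  assumes "p > 0" "Q * p \<le> S * M" "S * M < (Q + k) * p" "p dvd S"
  shows "multiple_in_window M Q k"
proof -
  from \<open>p dvd S\<close> obtain j where "S = j * p"
    by (metis dvd_div_mult_self)
  with assms have "Q * p \<le> (j * M) * p" "(j * M) * p < (Q + k) * p"
    by (simp_all add: ac_simps)
  then show ?thesis
    unfolding multiple_in_window_def using \<open>p > 0\<close> by auto
qed

lemma mod_near_zero_if_multiple_in_window:
  fixes p Q S M k :: nat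
  assumes "p > 0" "Q * p \<le> S * M" "S * M < (Q + k) * p" "multiple_in_window M Q k"
  shows "S mod p * M < k * p \<or> (p - S mod p) * M < k * p"
proof -
  obtain j where j: "Q \<le> j * M" "j * M < Q + k"
    using assms(4) unfolding multiple_in_window_def by blast
  have swap: "j * M * p = j * p * M"
    by (simp add: ac_simps)
  have "Q * p \<le> j * M * p"
    using j(1) by (rule mult_le_mono1)
  then have above: "S * M < j * p * M + k * p"
    using assms(3) add_mult_distrib[of Q k p] swap by linarith
  have "j * M * p < (Q + k) * p"
    using j(2) \<open>p > 0\<close> by simp
  then have below: "j * p * M < S * M + k * p"
    using assms(2) add_mult_distrib[of Q k p] swap by linarith
  show ?thesis
  proof (cases "j * p \<le> S")
    case True
    have "S = (S - j * p) + j * p"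
      using True by simp
    then have "S mod p = (S - j * p) mod p"
      by (metis mod_mult_self1)
    then have "S mod p \<le> S - j * p"
      by simp
    moreover have "(S - j * p) * M < k * p"
      unfolding diff_mult_distrib using above mult_le_mono1[OF True, of M] by linarith
    ultimately have "S mod p * M < k * p"
      by (meson le_less_trans mult_le_mono1)
    then show ?thesis ..
  next
    case False
    then have "S div p < j"
      by (simp add: less_mult_imp_div_less)
    then have "(S div p + 1) * p \<le> j * p"
      by (intro mult_le_mono1) simp
    then have "p - S mod p \<le> j * p - S"
      using div_mult_mod_eq[of S p] add_mult_distrib[of "S div p" 1 p] by linarith
    moreover have "(j * p - S) * M < k * p"
      unfolding diff_mult_distrib using below mult_le_mono1[of S "j * p" M] False by linarith
    ultimately have "(p - S mod p) * M < k * p"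
      by (meson le_less_trans mult_le_mono1)
    then show ?thesis ..
  qed
qed

fun to_bits :: "nat \<Rightarrow> nat \<Rightarrow> bool list" where
  "to_bits 0 q = []"
| "to_bits (Suc b) q = odd q # to_bits b (q div 2)"

fun from_bits :: "bool list \<Rightarrow> nat" where
  "from_bits [] = 0"
| "from_bits (c # cs) = of_bool c + 2 * from_bits cs"

lemma length_to_bits [simp]: "length (to_bits b q) = b"
  by (induction b arbitrary: q) auto

lemma from_bits_to_bits: "from_bits (to_bits b q) = q mod 2 ^ b"
proof (induction b arbitrary: q)
  case 0
  then show ?case by simp
next
  case (Suc b)
  have "q mod 2 ^ Suc b = q mod 2 + 2 * (q div 2 mod 2 ^ b)"
    using mod_mult2_eq[of q 2 "2 ^ b"] by simp
  then show ?case
    using Suc by (simp add: odd_iff_mod_2_eq_one)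
qed

definition shifted_input :: "nat \<Rightarrow> nat \<Rightarrow> nat \<Rightarrow> nat \<Rightarrow> nat" where
  "shifted_input p g i xi = xi + (if i = 0 then p - g else 0)"

definition sum_equal_msg :: "nat \<Rightarrow> nat \<Rightarrow> nat \<Rightarrow> nat \<Rightarrow> nat \<Rightarrow> nat \<Rightarrow> bool list" where
  "sum_equal_msg p g b i xi a = to_bits b (a * shifted_input p g i xi mod p * 2 ^ b div p)"

definition sum_equal_decide :: "nat \<Rightarrow> nat \<Rightarrow> bool list list \<Rightarrow> nat \<Rightarrow> bool" where
  "sum_equal_decide k b ms a \<longleftrightarrow> multiple_in_window (2 ^ b) (sum_list (map from_bits ms)) k"

lemma sum_length_sum_equal_msg: "(\<Sum>i<k. length (sum_equal_msg p g b i (x i) a)) = k * b"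
  by (simp add: sum_equal_msg_def)

lemma sum_list_from_bits_sum_equal_msg:
  assumes "p > 0"
  shows "sum_list (map from_bits (map (\<lambda>i. sum_equal_msg p g b i (x i) a) [0..<k]))
           = (\<Sum>i<k. a * shifted_input p g i (x i) mod p * 2 ^ b div p)"
proof -
  have "z mod p * 2 ^ b div p < 2 ^ b" for z :: nat
    using assms by (simp add: div_less_iff_less_mult mult.commute)
  then have "from_bits (sum_equal_msg p g b i (x i) a) = a * shifted_input p g i (x i) mod p * 2 ^ b div p" for i
    by (simp add: sum_equal_msg_def from_bits_to_bits)
  then show ?thesis
    by (simp add: sum_list_sum_nth atLeast0LessThan)
qed

lemma sum_shifted_input_mod:
  assumes "k > 0"
  shows "(\<Sum>i<k. a * shifted_input p g i (x i) mod p) mod p = a * ((\<Sum>i<k. x i) + (p - g)) mod p"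
proof -
  have "(\<Sum>i<k. shifted_input p g i (x i)) = (\<Sum>i<k. x i) + (p - g)"
    using assms by (simp add: shifted_input_def sum.distrib)
  then show ?thesis
    by (simp add: mod_sum_eq sum_distrib_left[symmetric])
qed

lemma card_sum_equal_errors:
  fixes p g k b :: nat and x :: "nat \<Rightarrow> nat"
  assumes "prime p" "g < p" "k > 0"
  shows "card {a \<in> {1..<p}. sum_equal_decide k b (map (\<lambda>i. sum_equal_msg p g b i (x i) a) [0..<k]) a
                              \<noteq> sum_equal p g k x}
           \<le> 2 * (k * p div 2 ^ b)"
    (is "card {a \<in> {1..<p}. ?err a} \<le> _")
proof -
  define M :: nat where "M = 2 ^ b"
  define D where "D = (\<Sum>i<k. x i) + (p - g)"
  define z where "z a i = a * shifted_input p g i (x i) mod p" for a i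
  define S where "S a = (\<Sum>i<k. z a i)" for a
  define Q where "Q a = (\<Sum>i<k. z a i * M div p)" for a
  have "p > 0"
    using assms(1) prime_gt_0_nat by blast
  have decide: "sum_equal_decide k b (map (\<lambda>i. sum_equal_msg p g b i (x i) a) [0..<k]) a
                  \<longleftrightarrow> multiple_in_window M (Q a) k" for a
    unfolding sum_equal_decide_def sum_list_from_bits_sum_equal_msg[OF \<open>p > 0\<close>] Q_def z_def M_def ..
  have window: "Q a * p \<le> S a * M" "S a * M < (Q a + k) * p" for a
    using sum_div_mult_le[where f = "\<lambda>i. z a i * M" and A = "{..<k}" and p = p]
      sum_less_sum_div_add_card_mult[where f = "\<lambda>i. z a i * M" and A = "{..<k}" and p = p]
      \<open>k > 0\<close> \<open>p > 0\<close>
    by (simp_all add: S_def Q_def sum_distrib_right lessThan_empty_iff)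
  have S_mod: "S a mod p = a * D mod p" for a
    unfolding S_def z_def D_def using sum_shifted_input_mod[OF \<open>k > 0\<close>] .
  have correct: "sum_equal p g k x \<longleftrightarrow> p dvd D"
    unfolding sum_equal_def D_def using dvd_add_diff_iff_mod_eq[OF \<open>g < p\<close>] \<open>g < p\<close> by simp
  show ?thesis
  proof (cases "p dvd D")
    case True
    have "\<not> ?err a" for a
    proof -
      have "p dvd S a"
        using True S_mod by (simp add: dvd_eq_mod_eq_0 mod_mult_right_eq[symmetric])
      then show ?thesis
        using multiple_in_window_if_dvd[OF \<open>p > 0\<close> window] decide True correct by simp
    qed
    then show ?thesis
      by simp
  next
    case False
    define B where "B = {r \<in> {1..<p}. r * M < k * p \<or> (p - r) * M < k * p}"
    have "a * D mod p \<in> B" if a: "a \<in> {1..<p}" "?err a" for a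
    proof -
      have "multiple_in_window M (Q a) k"
        using a decide False correct by simp
      then have near: "S a mod p * M < k * p \<or> (p - S a mod p) * M < k * p"
        using mod_near_zero_if_multiple_in_window[OF \<open>p > 0\<close> window] by blast
      have "\<not> p dvd a"
        using a by (auto dest: dvd_imp_le)
      then have "a * D mod p \<noteq> 0"
        using False assms(1) by (simp add: prime_dvd_mult_iff flip: dvd_eq_mod_eq_0)
      then show "a * D mod p \<in> B"
        using near S_mod \<open>p > 0\<close> by (simp add: B_def)
    qed
    then have "{a \<in> {1..<p}. ?err a} \<subseteq> (\<lambda>a. a * D mod p) -` B \<inter> {..<p}"
      by auto
    then have "card {a \<in> {1..<p}. ?err a} \<le> card ((\<lambda>a. a * D mod p) -` B \<inter> {..<p})"
      by (intro card_mono) auto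
    also have "\<dots> \<le> card B"
      using inj_on_mult_mod_prime[OF assms(1) False] by (rule card_vimage_inj_on_le) (simp add: B_def)
    also have "\<dots> \<le> 2 * (k * p div M)"
      unfolding B_def by (rule card_near_zero_residues) (simp add: M_def)
    finally show ?thesis
      by (simp add: M_def)
  qed
qed

lemma sum_equal_error_prob:
  fixes p g k b :: nat and x :: "nat \<Rightarrow> nat"
  assumes "prime p" "g < p" "k > 0"
  shows "measure_pmf.prob (pmf_of_set {1..<p})
           {a. sum_equal_decide k b (map (\<lambda>i. sum_equal_msg p g b i (x i) a) [0..<k]) a
                 \<noteq> sum_equal p g k x}
           \<le> 4 * real k / 2 ^ b"
    (is "measure_pmf.prob _ {a. ?err a} \<le> _")
proof -
  have "p \<ge> 2"
    using assms(1) prime_ge_2_nat by blast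
  then have nonempty: "{1..<p} \<noteq> {}"
    by simp
  have "measure_pmf.prob (pmf_of_set {1..<p}) {a. ?err a} = card {a \<in> {1..<p}. ?err a} / (p - 1)"
    using nonempty by (simp add: measure_pmf_of_set Int_def conj_commute)
  also have "\<dots> \<le> 2 * (k * p div 2 ^ b) / (p - 1)"
    using card_sum_equal_errors[OF assms, of b x] by (intro divide_right_mono) simp_all
  also have "\<dots> \<le> 2 * (k * p / 2 ^ b) / (p - 1)"
  proof -
    have "real (k * p div 2 ^ b) \<le> real (k * p) / real (2 ^ b)"
      by (rule of_nat_div_le_of_nat)
    then show ?thesis
      by (intro divide_right_mono) simp_all
  qed
  also have "\<dots> \<le> 4 * real k / 2 ^ b"
    using \<open>p \<ge> 2\<close> by (simp add: field_simps, intro mult_left_mono mult_right_mono) simp_all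
  finally show ?thesis .
qed

lemma log_ceiling_bits:
  fixes y :: real
  assumes "1 \<le> y"
  shows "y \<le> 2 ^ nat \<lceil>log 2 y\<rceil>" and "nat \<lceil>log 2 y\<rceil> \<le> log 2 y + 1"
proof -
  have "log 2 y \<ge> 0"
    using assms by simp
  have "y = 2 powr log 2 y"
    using assms by simp
  also have "\<dots> \<le> 2 powr nat \<lceil>log 2 y\<rceil>"
    using \<open>log 2 y \<ge> 0\<close> by (intro powr_mono) auto
  finally show "y \<le> 2 ^ nat \<lceil>log 2 y\<rceil>"
    by (simp add: powr_realpow)
  show "nat \<lceil>log 2 y\<rceil> \<le> log 2 y + 1"
    using \<open>log 2 y \<ge> 0\<close> by linarith
qed

theorem theorem4p3:
  shows "\<exists>C::real. \<forall>(p::nat) (k::nat) (eps::real) (g::nat).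
           prime p \<longrightarrow> k > 0 \<longrightarrow> 0 < eps \<longrightarrow> eps < 1 \<longrightarrow> g < p \<longrightarrow>
           (\<exists>R enc dec. one_round_protocol p k (sum_equal p g k) R enc dec eps
                          (real k * log 2 (real k / eps) + C * real k))"
proof (rule exI[of _ 3], intro allI impI)
  fix p k g :: nat and eps :: real
  assume "prime p" "k > 0" "0 < eps" "eps < 1" "g < p"
  define b where "b = nat \<lceil>log 2 (4 * real k / eps)\<rceil>"
  have "1 \<le> 4 * real k / eps"
    using \<open>k > 0\<close> \<open>0 < eps\<close> \<open>eps < 1\<close> by (simp add: field_simps)
  note bits = log_ceiling_bits[OF this, folded b_def]
  have error: "4 * real k / 2 ^ b \<le> eps"
    using bits(1) \<open>0 < eps\<close> by (simp add: field_simps)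
  have "log 2 (4 :: real) = 2"
    using log_pow_cancel[of "2 :: real" 2] by simp
  then have "log 2 (4 * real k / eps) = log 2 (real k / eps) + 2"
    using \<open>k > 0\<close> \<open>0 < eps\<close> by (simp add: log_mult log_divide)
  then have length: "real (k * b) \<le> real k * log 2 (real k / eps) + 3 * real k"
    using mult_left_mono[OF bits(2), of "real k"] by (simp add: algebra_simps)
  have "one_round_protocol p k (sum_equal p g k) (pmf_of_set {1..<p})
          (sum_equal_msg p g b) (sum_equal_decide k b) eps
          (real k * log 2 (real k / eps) + 3 * real k)"
    unfolding one_round_protocol_def sum_length_sum_equal_msg
    using sum_equal_error_prob[OF \<open>prime p\<close> \<open>g < p\<close> \<open>k > 0\<close>] error length
    by (meson order_trans)
  then show "\<exists>R enc dec. one_round_protocol p k (sum_equal p g k) R enc dec eps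
               (real k * log 2 (real k / eps) + 3 * real k)"
    by blast
qed

end
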